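(* Let $k$ be a positive integer, $a=6k+1$, $b=9k+2$, $c=9k+3$, $S=\{a,b,c\}$ and $G=\langle S\rangle$. For $i\in\mathbb{N}^*$ define $A_{i,k}=\{3ia\}$, $B_{i,k}=[3ia+1,\,3ia+3i]$, $C_{i,k}=[3ia+3k+1,\,3ia+3k+2+3(i-1)]$, $D_{i,k}=A_{i,k}+\{a\}$, $E_{i,k}=B_{i,k}+\{a\}$, $F_{i,k}=[3ia+b,\,3ia+c+3i]$, $G_{i,k}=D_{i,k}+\{a\}$, $I_{i,k}=E_{i,k}+\{a\}$, $J_{i,k}=F_{i,k}+\{a\}$, let $T_{i,k}=A_{i,k}\cup B_{i,k}\cup C_{i,k}\cup D_{i,k}\cup E_{i,k}\cup F_{i,k}\cup G_{i,k}\cup I_{i,k}\cup J_{i,k}$, and let $H_{3,k}=\{0\}\cup(S+\{0,a\})\cup\bigcup_{i\in\mathbb{N}^*}T_{i,k}$. Then: (1) $H_{3,k}$ is a submonoid of $(\mathbb{N},+,0)$ containing $S$; (2) for every $i\in[1,k-1]$: $A_{i,k}<B_{i,k}<C_{i,k}<D_{i,k}<E_{i,k}<F_{i,k}<G_{i,k}<I_{i,k}<J_{i,k}$ and $J_{i,k}<A_{i+1,k}$; moreover $A_{k,k}<B_{k,k}<C_{k,k}<D_{k,k}$; (3) $[(3k+1)a,\infty[\ \subseteq H_{3,k}$; (4) $G=H_{3,k}$; (5) $H_{3,k}$ is a $3$-permutation numerical semigroup.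
   Context: $\mathbb{N}=\{0,1,2,\dots\}$, $\mathbb{N}^*=\mathbb{N}\setminus\{0\}$. A numerical semigroup is a submonoid $G$ of $(\mathbb{N},+,0)$ with $\mathbb{N}\setminus G$ finite; $\langle S\rangle$ is the submonoid generated by $S$. Writing the elements of a numerical semigroup as $0=g_0<g_1<g_2<\cdots$, it is an $n$-permutation numerical semigroup if it is generated by $\{g_1,\dots,g_n\}$ and for every $k\in\mathbb{N}$ the tuple $(g_{kn+1}\bmod n,\dots,g_{kn+n}\bmod n)$ contains exactly one representative of each residue class mod $n$. Notation: $[a,b]=\{x\in\mathbb{N}:a\le x\le b\}$, $[a,\infty[=\{x\in\mathbb{N}:x\ge a\}$; for $X,Y\subseteq\mathbb{N}$, $X+Y=\{x+y:x\in X,y\in Y\}$. For nonempty $X,Y$, $X<Y$ means $x<y$ for all $x\in X,y\in Y$. (The set $G_{i,k}$ is unrelated to $G=\langle S\rangle$.) *)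

theory Defs
  imports Main "HOL-Library.Infinite_Set"
begin

definition submonoid :: "nat set \<Rightarrow> bool" where
  "submonoid M \<longleftrightarrow> 0 \<in> M \<and> (\<forall>x\<in>M. \<forall>y\<in>M. x + y \<in> M)"

inductive_set gen :: "nat set \<Rightarrow> nat set" for S :: "nat set" where
  gen_zero: "0 \<in> gen S"
| gen_add: "x \<in> gen S \<Longrightarrow> s \<in> S \<Longrightarrow> x + s \<in> gen S"

definition numerical_semigroup :: "nat set \<Rightarrow> bool" where
  "numerical_semigroup G \<longleftrightarrow> submonoid G \<and> finite (UNIV - G)"

(* g_j = enumerate G j : elements of G in increasing order, g_0 = 0 *)
definition perm_numerical_semigroup :: "nat \<Rightarrow> nat set \<Rightarrow> bool" where
  "perm_numerical_semigroup n G \<longleftrightarrow>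
     numerical_semigroup G \<and>
     G = gen (enumerate G ` {1..n}) \<and>
     (\<forall>m::nat. bij_betw (\<lambda>j. enumerate G (m * n + j) mod n) {1..n} {..<n})"

definition sumset :: "nat set \<Rightarrow> nat set \<Rightarrow> nat set" where
  "sumset X Y = {x + y | x y. x \<in> X \<and> y \<in> Y}"

definition set_less :: "nat set \<Rightarrow> nat set \<Rightarrow> bool" where
  "set_less X Y \<longleftrightarrow> X \<noteq> {} \<and> Y \<noteq> {} \<and> (\<forall>x\<in>X. \<forall>y\<in>Y. x < y)"

definition aa :: "nat \<Rightarrow> nat" where "aa k = 6*k + 1"
definition bb :: "nat \<Rightarrow> nat" where "bb k = 9*k + 2"
definition cc :: "nat \<Rightarrow> nat" where "cc k = 9*k + 3"
definition SS :: "nat \<Rightarrow> nat set" where "SS k = {aa k, bb k, cc k}"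

definition Aik :: "nat \<Rightarrow> nat \<Rightarrow> nat set" where "Aik i k = {3*i*aa k}"
definition Bik :: "nat \<Rightarrow> nat \<Rightarrow> nat set" where
  "Bik i k = {3*i*aa k + 1 .. 3*i*aa k + 3*i}"
definition Cik :: "nat \<Rightarrow> nat \<Rightarrow> nat set" where
  "Cik i k = {3*i*aa k + 3*k + 1 .. 3*i*aa k + 3*k + 2 + 3*(i - 1)}"
definition Dik :: "nat \<Rightarrow> nat \<Rightarrow> nat set" where "Dik i k = sumset (Aik i k) {aa k}"
definition Eik :: "nat \<Rightarrow> nat \<Rightarrow> nat set" where "Eik i k = sumset (Bik i k) {aa k}"
definition Fik :: "nat \<Rightarrow> nat \<Rightarrow> nat set" where
  "Fik i k = {3*i*aa k + bb k .. 3*i*aa k + cc k + 3*i}"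
definition Gik :: "nat \<Rightarrow> nat \<Rightarrow> nat set" where "Gik i k = sumset (Dik i k) {aa k}"
definition Iik :: "nat \<Rightarrow> nat \<Rightarrow> nat set" where "Iik i k = sumset (Eik i k) {aa k}"
definition Jik :: "nat \<Rightarrow> nat \<Rightarrow> nat set" where "Jik i k = sumset (Fik i k) {aa k}"

definition Tik :: "nat \<Rightarrow> nat \<Rightarrow> nat set" where
  "Tik i k = Aik i k \<union> Bik i k \<union> Cik i k \<union> Dik i k \<union> Eik i k \<union> Fik i k
             \<union> Gik i k \<union> Iik i k \<union> Jik i k"

definition H3 :: "nat \<Rightarrow> nat set" where
  "H3 k = {0} \<union> sumset (SS k) {0, aa k} \<union> (\<Union>i\<in>{1..}. Tik i k)"

end

theory Submission
  imports Defs
begin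

text \<open>
  Write \<open>x = n a + t\<close>. Then \<open>H\<^sub>3\<^sub>,\<^sub>k\<close> consists of the \<open>x\<close> with \<open>t \<le> 3\<lfloor>n/3\<rfloor>\<close> or
  \<open>3k < t < 3k + 3\<lceil>n/3\<rceil>\<close>: on level \<open>n = 3i + s\<close> these two runs are exactly the blocks
  \<open>A\<union>B, C\<close> (\<open>s = 0\<close>), \<open>D\<union>E, F\<close> (\<open>s = 1\<close>) and \<open>G\<union>I, J\<close> (\<open>s = 2\<close>). As \<open>b = a + 3k + 1\<close>
  and \<open>c = a + 3k + 2\<close>, adding a generator moves a run of level \<open>n\<close> into a run of level \<open>n + 1\<close>
  or \<open>n + 2\<close>, and every nonzero element is a generator plus an element, so \<open>H\<^sub>3\<^sub>,\<^sub>k = \<langle>a, b, c\<rangle>\<close>.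
  From level \<open>3k + 1\<close> on the two runs cover all residues \<open>t < a\<close>.

  For the permutation property, give each positive element the weight 1, 4 or -5 according to its
  residue mod 3. The weights are \<open>\<equiv> 1 (mod 3)\<close> and telescope along runs of consecutive integers
  to differences of the potentials 0, 1, 5 of residues. On each level below \<open>3k + 1\<close> the second run
  starts one residue after the first one ends, so every partial weight sum is such a difference and
  the sum over the level vanishes; beyond the threshold the same holds for blocks of three integers.
  A difference of potentials divisible by 3 is 0, so the weight of \<open>g\<^sub>1, \<dots>, g\<^sub>3\<^sub>m\<close> is 0, and
  then the next three weights can only have zero sum with balanced partial sums if the residues of
  \<open>g\<^sub>3\<^sub>m\<^sub>+\<^sub>1, g\<^sub>3\<^sub>m\<^sub>+\<^sub>2, g\<^sub>3\<^sub>m\<^sub>+\<^sub>3\<close> are distinct.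
\<close>

lemma gen_add_closed:
  assumes "x \<in> gen S" and "y \<in> gen S"
  shows "x + y \<in> gen S"
  using assms(2)
proof (induction y rule: gen.induct)
  case gen_zero
  then show ?case using assms(1) by simp
next
  case (gen_add y s)
  then show ?case using gen.gen_add[of "x + y" S s] by (simp add: add.assoc)
qed

lemma submonoid_gen: "submonoid (gen S)"
  unfolding submonoid_def using gen.gen_zero gen_add_closed by blast

lemma subset_gen: "S \<subseteq> gen S"
  using gen.gen_add[OF gen.gen_zero] by fastforce

lemma gen_subset_closed:
  assumes "0 \<in> M" and "\<And>x s. x \<in> M \<Longrightarrow> s \<in> S \<Longrightarrow> x + s \<in> M"
  shows "gen S \<subseteq> M"
proof
  show "x \<in> M" if "x \<in> gen S" for x
    using that by induction (use assms in auto)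
qed

lemma subset_gen_if_split:
  assumes "0 \<notin> S" and split: "\<And>x. x \<in> M \<Longrightarrow> x \<noteq> 0 \<Longrightarrow> \<exists>s\<in>S. \<exists>y\<in>M. x = s + y"
  shows "M \<subseteq> gen S"
proof
  show "x \<in> gen S" if "x \<in> M" for x
    using that
  proof (induction x rule: less_induct)
    case (less x)
    show ?case
    proof (cases "x = 0")
      case True
      then show ?thesis by (simp add: gen.gen_zero)
    next
      case False
      then obtain s y where "s \<in> S" "y \<in> M" "x = s + y" using split less.prems by blast
      moreover have "s \<noteq> 0" using \<open>s \<in> S\<close> assms(1) by metis
      ultimately have "y \<in> gen S" using less.IH by simp
      then show ?thesis using gen.gen_add[of y S s] \<open>s \<in> S\<close> \<open>x = s + y\<close> by (simp add: add.commute)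
    qed
  qed
qed

lemma sumset_singleton: "sumset X {c} = (\<lambda>x. x + c) ` X"
  unfolding sumset_def by auto

lemma sumset_pair: "sumset {x, y, z} {0, d} = {x, y, z, x + d, y + d, z + d}"
  unfolding sumset_def by (auto; metis add.right_neutral)

lemma mem_shifted_interval: "(x::nat) \<in> {m + l .. m + r} \<longleftrightarrow> (\<exists>t. x = m + t \<and> l \<le> t \<and> t \<le> r)"
  by (auto intro!: exI[of _ "x - m"])

lemma set_less_atLeastAtMost:
  "set_less {l..u} {l'..u'} \<longleftrightarrow> l \<le> u \<and> l' \<le> u' \<and> (u::nat) < l'"
proof
  assume "set_less {l..u} {l'..u'}"
  then have ne: "{l..u} \<noteq> {}" "{l'..u'} \<noteq> {}" and lt: "\<forall>x\<in>{l..u}. \<forall>y\<in>{l'..u'}. x < y"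
    unfolding set_less_def by blast+
  from ne have "l \<le> u" "l' \<le> u'" by simp_all
  moreover from this have "u < l'" using lt by (metis atLeastAtMost_iff order_refl)
  ultimately show "l \<le> u \<and> l' \<le> u' \<and> u < l'" by blast
next
  assume "l \<le> u \<and> l' \<le> u' \<and> u < l'"
  then show "set_less {l..u} {l'..u'}" unfolding set_less_def by force
qed

section \<open>Description of \<open>H3\<close> by levels\<close>

text \<open>The offset \<open>t\<close> is not required to be below \<open>aa k\<close>, which makes the closure
  properties free of carries into the next level.\<close>

definition level_mem :: "nat \<Rightarrow> nat \<Rightarrow> nat \<Rightarrow> bool" where
  "level_mem k n t \<longleftrightarrow> t \<le> 3 * (n div 3) \<or> (3*k < t \<and> t < 3*k + 3 * ((n + 2) div 3))"

lemma level_memI1: "t \<le> 3 * (n div 3) \<Longrightarrow> level_mem k n t"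
  unfolding level_mem_def by simp

lemma level_memI2: "3*k < t \<Longrightarrow> t < 3*k + 3 * ((n + 2) div 3) \<Longrightarrow> level_mem k n t"
  unfolding level_mem_def by simp

lemma level_mem_mono: "level_mem k n t \<Longrightarrow> n \<le> n' \<Longrightarrow> level_mem k n' t"
  unfolding level_mem_def using div_le_mono[of n n' 3] div_le_mono[of "n + 2" "n' + 2" 3] by linarith

lemma level_mem_third:
  assumes "s < 3"
  shows "level_mem k (3*i + s) t \<longleftrightarrow> t \<le> 3*i \<or> (3*k < t \<and> t < 3*k + 3*i + (if s = 0 then 0 else 3))"
proof -
  have "(3*i + s) div 3 = i" "(3*i + s + 2) div 3 = i + (if s = 0 then 0 else 1)"
    using assms by auto
  then show ?thesis unfolding level_mem_def by (simp add: algebra_simps)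
qed

lemma level_mem_0: "level_mem k 0 t \<longleftrightarrow> t = 0"
  unfolding level_mem_def by auto

lemma level_mem_1_2:
  assumes "n = 1 \<or> n = 2"
  shows "level_mem k n t \<longleftrightarrow> t = 0 \<or> t = 3*k + 1 \<or> t = 3*k + 2"
  using assms unfolding level_mem_def by auto

lemma level_mem_beyond:
  assumes "3*k + 1 \<le> n" and "t < aa k"
  shows "level_mem k n t"
proof -
  from assms(1) have "k \<le> n div 3" "k + 1 \<le> (n + 2) div 3" by linarith+
  then show ?thesis using assms(2) unfolding level_mem_def aa_def by linarith
qed

lemma level_mem_large:
  assumes "level_mem k n t" and "aa k \<le> t"
  shows "3*k + 1 \<le> n"
proof -
  have "3 * (n div 3) \<le> n" "3 * ((n + 2) div 3) \<le> n + 2" by simp_all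
  moreover have "k < (n + 2) div 3" if "t < 3*k + 3 * ((n + 2) div 3)"
    using that assms(2) unfolding aa_def by linarith
  ultimately show ?thesis using assms unfolding level_mem_def aa_def by linarith
qed

lemma generators_as_offsets: "bb k = aa k + (3*k + 1)" "cc k = aa k + (3*k + 2)" "aa k = 6*k + 1"
  by (simp_all add: aa_def bb_def cc_def)

lemma pieces_as_intervals:
  "Aik i k = {3*i*aa k .. 3*i*aa k}"
  "Dik i k = {3*i*aa k + aa k .. 3*i*aa k + aa k}"
  "Eik i k = {3*i*aa k + aa k + 1 .. 3*i*aa k + aa k + 3*i}"
  "Gik i k = {3*i*aa k + 2*aa k .. 3*i*aa k + 2*aa k}"
  "Iik i k = {3*i*aa k + 2*aa k + 1 .. 3*i*aa k + 2*aa k + 3*i}"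
  "Jik i k = {3*i*aa k + bb k + aa k .. 3*i*aa k + cc k + 3*i + aa k}"
  unfolding Aik_def Dik_def Eik_def Gik_def Iik_def Jik_def Bik_def Fik_def
    sumset_singleton image_add_atLeastAtMost' image_insert image_empty
  by (simp_all add: algebra_simps)

lemma third_pieces:
  fixes i k :: nat
  assumes "1 \<le> i"
  defines "P \<equiv> 3*i*aa k"
  shows "Aik i k \<union> Bik i k = {P + 0 .. P + 3*i}"
    and "Cik i k = {P + (3*k+1) .. P + (3*k + 3*i - 1)}"
    and "Dik i k \<union> Eik i k = {(P + aa k) + 0 .. (P + aa k) + 3*i}"
    and "Fik i k = {(P + aa k) + (3*k+1) .. (P + aa k) + (3*k + 3*i + 2)}"
    and "Gik i k \<union> Iik i k = {(P + 2*aa k) + 0 .. (P + 2*aa k) + 3*i}"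
    and "Jik i k = {(P + 2*aa k) + (3*k+1) .. (P + 2*aa k) + (3*k + 3*i + 2)}"
  using assms
  unfolding P_def Aik_def Bik_def Cik_def Dik_def Eik_def Fik_def Gik_def Iik_def Jik_def
    sumset_singleton image_add_atLeastAtMost' image_insert image_empty
  by (auto simp: aa_def bb_def cc_def)

lemma mem_ABC_iff:
  assumes "1 \<le> i"
  shows "x \<in> Aik i k \<union> Bik i k \<union> Cik i k \<longleftrightarrow> (\<exists>t. x = (3*i) * aa k + t \<and> level_mem k (3*i) t)"
  using assms level_mem_third[of 0 k i] unfolding third_pieces(1,2)[OF assms] Un_iff mem_shifted_interval
  by auto

lemma mem_DEF_iff:
  assumes "1 \<le> i"
  shows "x \<in> Dik i k \<union> Eik i k \<union> Fik i k \<longleftrightarrow> (\<exists>t. x = (3*i + 1) * aa k + t \<and> level_mem k (3*i + 1) t)"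
proof -
  have "3*i*aa k + aa k = (3*i + 1) * aa k" by simp
  then show ?thesis
    using level_mem_third[of 1 k i] unfolding third_pieces(3,4)[OF assms] Un_iff mem_shifted_interval
    by auto
qed

lemma mem_GIJ_iff:
  assumes "1 \<le> i"
  shows "x \<in> Gik i k \<union> Iik i k \<union> Jik i k \<longleftrightarrow> (\<exists>t. x = (3*i + 2) * aa k + t \<and> level_mem k (3*i + 2) t)"
proof -
  have "3*i*aa k + 2 * aa k = (3*i + 2) * aa k" by (simp add: algebra_simps)
  then show ?thesis
    using level_mem_third[of 2 k i] unfolding third_pieces(5,6)[OF assms] Un_iff mem_shifted_interval
    by auto
qed

lemma mem_Tik_iff:
  assumes "1 \<le> i"
  shows "x \<in> Tik i k \<longleftrightarrow> (\<exists>n t. 3*i \<le> n \<and> n < 3*i + 3 \<and> x = n * aa k + t \<and> level_mem k n t)"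
    (is "_ \<longleftrightarrow> ?R")
proof
  assume "x \<in> Tik i k"
  then consider "x \<in> Aik i k \<union> Bik i k \<union> Cik i k" | "x \<in> Dik i k \<union> Eik i k \<union> Fik i k"
    | "x \<in> Gik i k \<union> Iik i k \<union> Jik i k"
    unfolding Tik_def by blast
  then show ?R
  proof cases
    case 1
    then obtain t where "x = (3*i) * aa k + t" "level_mem k (3*i) t"
      using mem_ABC_iff[THEN iffD1, OF assms] by blast
    then show ?thesis by (intro exI[of _ "3*i"] exI[of _ t]) simp
  next
    case 2
    then obtain t where "x = (3*i + 1) * aa k + t" "level_mem k (3*i + 1) t"
      using mem_DEF_iff[THEN iffD1, OF assms] by blast
    then show ?thesis by (intro exI[of _ "3*i + 1"] exI[of _ t]) simp
  next
    case 3
    then obtain t where "x = (3*i + 2) * aa k + t" "level_mem k (3*i + 2) t"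
      using mem_GIJ_iff[THEN iffD1, OF assms] by blast
    then show ?thesis by (intro exI[of _ "3*i + 2"] exI[of _ t]) simp
  qed
next
  assume ?R
  then obtain n t where n: "3*i \<le> n" "n < 3*i + 3" and x: "x = n * aa k + t" and t: "level_mem k n t"
    by blast
  from n consider "n = 3*i" | "n = 3*i + 1" | "n = 3*i + 2" by linarith
  then show "x \<in> Tik i k"
  proof cases
    case 1
    then have "x \<in> Aik i k \<union> Bik i k \<union> Cik i k" using x t by (intro mem_ABC_iff[THEN iffD2, OF assms]) blast
    then show ?thesis unfolding Tik_def by blast
  next
    case 2
    then have "x \<in> Dik i k \<union> Eik i k \<union> Fik i k" using x t by (intro mem_DEF_iff[THEN iffD2, OF assms]) blast
    then show ?thesis unfolding Tik_def by blast
  next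
    case 3
    then have "x \<in> Gik i k \<union> Iik i k \<union> Jik i k" using x t by (intro mem_GIJ_iff[THEN iffD2, OF assms]) blast
    then show ?thesis unfolding Tik_def by blast
  qed
qed

lemma mem_small_iff:
  "x \<in> {0} \<union> sumset (SS k) {0, aa k} \<longleftrightarrow> (\<exists>n t. n < 3 \<and> x = n * aa k + t \<and> level_mem k n t)"
proof
  have levels: "level_mem k 0 0" "level_mem k n 0" "level_mem k n (3*k+1)" "level_mem k n (3*k+2)"
    if "n = 1 \<or> n = 2" for n
    using that level_mem_0 level_mem_1_2 by auto
  assume "x \<in> {0} \<union> sumset (SS k) {0, aa k}"
  then have "x = 0 * aa k + 0 \<or> x = 1 * aa k + 0 \<or> x = 1 * aa k + (3*k+1) \<or> x = 1 * aa k + (3*k+2)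
      \<or> x = 2 * aa k + 0 \<or> x = 2 * aa k + (3*k+1) \<or> x = 2 * aa k + (3*k+2)"
    unfolding SS_def sumset_pair by (auto simp: aa_def bb_def cc_def)
  moreover have "(0::nat) < 3" "(1::nat) < 3" "(2::nat) < 3" by simp_all
  ultimately show "\<exists>n t. n < 3 \<and> x = n * aa k + t \<and> level_mem k n t"
    using levels by blast
next
  assume "\<exists>n t. n < 3 \<and> x = n * aa k + t \<and> level_mem k n t"
  then obtain n t where n: "n < 3" and x: "x = n * aa k + t" and t: "level_mem k n t" by blast
  note abc = generators_as_offsets[of k]
  from n consider "n = 0" | "n = 1" | "n = 2" by linarith
  then have "x = 0 \<or> x = aa k \<or> x = bb k \<or> x = cc k \<or> x = aa k + aa k \<or> x = bb k + aa k \<or> x = cc k + aa k"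
  proof cases
    case 1
    then show ?thesis using x t level_mem_0 by simp
  next
    case 2
    then have "t = 0 \<or> t = 3*k + 1 \<or> t = 3*k + 2" using t level_mem_1_2 by blast
    then show ?thesis using x 2 abc by auto
  next
    case 3
    then have "t = 0 \<or> t = 3*k + 1 \<or> t = 3*k + 2" using t level_mem_1_2 by blast
    then show ?thesis using x 3 abc by auto
  qed
  then show "x \<in> {0} \<union> sumset (SS k) {0, aa k}"
    unfolding SS_def sumset_pair by auto
qed

lemma mem_H3_iff: "x \<in> H3 k \<longleftrightarrow> (\<exists>n t. x = n * aa k + t \<and> level_mem k n t)"
proof
  assume "x \<in> H3 k"
  then consider "x \<in> {0} \<union> sumset (SS k) {0, aa k}" | i where "1 \<le> i" "x \<in> Tik i k"
    unfolding H3_def by auto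
  then show "\<exists>n t. x = n * aa k + t \<and> level_mem k n t"
  proof cases
    case 1
    then show ?thesis using mem_small_iff[THEN iffD1, OF 1] by blast
  next
    case 2
    then show ?thesis using mem_Tik_iff[THEN iffD1, OF 2] by blast
  qed
next
  assume "\<exists>n t. x = n * aa k + t \<and> level_mem k n t"
  then obtain n t where x: "x = n * aa k + t" and t: "level_mem k n t" by blast
  show "x \<in> H3 k"
  proof (cases "n < 3")
    case True
    then have "x \<in> {0} \<union> sumset (SS k) {0, aa k}"
      using x t by (intro mem_small_iff[THEN iffD2]) blast
    then show ?thesis unfolding H3_def by blast
  next
    case False
    then have "1 \<le> n div 3" "3 * (n div 3) \<le> n" "n < 3 * (n div 3) + 3" by auto
    then have "x \<in> Tik (n div 3) k"
      using x t by (intro mem_Tik_iff[THEN iffD2]) blast+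
    then show ?thesis unfolding H3_def using \<open>1 \<le> n div 3\<close> by auto
  qed
qed

lemma H3I: "level_mem k n t \<Longrightarrow> x = n * aa k + t \<Longrightarrow> x \<in> H3 k"
  using mem_H3_iff by blast

lemma H3E:
  assumes "x \<in> H3 k"
  obtains n t where "x = n * aa k + t" "level_mem k n t"
  using assms mem_H3_iff by blast

section \<open>\<open>H3\<close> is generated by \<open>SS\<close>\<close>

lemma H3_add_generator:
  assumes "x \<in> H3 k" and "s \<in> SS k"
  shows "x + s \<in> H3 k"
proof -
  obtain n t where x: "x = n * aa k + t" and t: "level_mem k n t"
    using assms(1) by (rule H3E)
  note abc = generators_as_offsets[of k]
  have div3: "(n + 1 + 2) div 3 = n div 3 + 1" by simp
  from assms(2) consider "s = aa k" | "s = bb k" | "s = cc k" unfolding SS_def by blast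
  then show ?thesis
  proof cases
    case 1
    then show ?thesis using x level_mem_mono[OF t, of "n + 1"] by (intro H3I[of k "n + 1" t]) auto
  next
    case 2
    show ?thesis
    proof (cases "t \<le> 3 * (n div 3)")
      case True
      then have "level_mem k (n + 1) (t + 3*k + 1)" using div3 by (intro level_memI2) linarith+
      then show ?thesis using x 2 abc by (intro H3I[of k "n + 1" "t + 3*k + 1"]) (simp_all add: algebra_simps)
    next
      case False
      then have "3*k < t" "t < 3*k + 3 * ((n + 2) div 3)" using t unfolding level_mem_def by auto
      then have "level_mem k (n + 2) (t - 3*k)" by (intro level_memI1) linarith
      then show ?thesis using x 2 abc \<open>3*k < t\<close> by (intro H3I[of k "n + 2" "t - 3*k"]) (simp_all add: algebra_simps)
    qed
  next
    case 3
    show ?thesis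
    proof (cases "t \<le> 3 * (n div 3)")
      case True
      then have "level_mem k (n + 1) (t + 3*k + 2)" using div3 by (intro level_memI2) linarith+
      then show ?thesis using x 3 abc by (intro H3I[of k "n + 1" "t + 3*k + 2"]) (simp_all add: algebra_simps)
    next
      case False
      then have "3*k < t" "t < 3*k + 3 * ((n + 2) div 3)" using t unfolding level_mem_def by auto
      then have "level_mem k (n + 2) (t + 1 - 3*k)" by (intro level_memI1) linarith
      then show ?thesis using x 3 abc \<open>3*k < t\<close> by (intro H3I[of k "n + 2" "t + 1 - 3*k"]) (simp_all add: algebra_simps)
    qed
  qed
qed

lemma H3_split_first_run:
  assumes "0 < t" and "t \<le> 3 * (n div 3)"
  shows "\<exists>s\<in>SS k. \<exists>y\<in>H3 k. n * aa k + t = s + y"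
proof -
  note abc = generators_as_offsets[of k]
  have "2 \<le> n" using assms by (cases "n < 3") simp_all
  then obtain m where m: "n = m + 2" by (metis le_add_diff_inverse2)
  have m3: "(m + 2) div 3 = n div 3" using m by simp
  show ?thesis
  proof (cases "t = 1")
    case True
    have "m * aa k + (3*k + 1) \<in> H3 k"
      using assms m3 True by (intro H3I[of k m "3*k + 1"] level_memI2) simp_all
    moreover have "n * aa k + t = bb k + (m * aa k + (3*k + 1))" using m True abc by (simp add: algebra_simps)
    ultimately show ?thesis unfolding SS_def by blast
  next
    case False
    have "m * aa k + (t + 3*k - 1) \<in> H3 k"
      using assms m3 False by (intro H3I[of k m "t + 3*k - 1"] level_memI2) simp_all
    moreover have "n * aa k + t = cc k + (m * aa k + (t + 3*k - 1))" using m False assms abc by (simp add: algebra_simps)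
    ultimately show ?thesis unfolding SS_def by blast
  qed
qed

lemma H3_split_second_run:
  assumes "3*k < t" and "t < 3*k + 3 * ((n + 2) div 3)"
  shows "\<exists>s\<in>SS k. \<exists>y\<in>H3 k. n * aa k + t = s + y"
proof -
  note abc = generators_as_offsets[of k]
  have "1 \<le> n" using assms by (cases n) simp_all
  then obtain m where m: "n = m + 1" by (metis le_add_diff_inverse2)
  have m3: "(n + 2) div 3 = m div 3 + 1" using m by simp
  show ?thesis
  proof (cases "t = 3*k + 1")
    case True
    have "m * aa k + 0 \<in> H3 k" by (rule H3I[of k m 0]) (simp_all add: level_memI1)
    moreover have "n * aa k + t = bb k + (m * aa k + 0)" using m True abc by (simp add: algebra_simps)
    ultimately show ?thesis unfolding SS_def by blast
  next
    case False
    have "m * aa k + (t - 3*k - 2) \<in> H3 k"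
      using assms m3 by (intro H3I[of k m "t - 3*k - 2"] level_memI1) simp_all
    moreover have "n * aa k + t = cc k + (m * aa k + (t - 3*k - 2))" using m False assms abc by (simp add: algebra_simps)
    ultimately show ?thesis unfolding SS_def by blast
  qed
qed

lemma H3_split_generator:
  assumes "x \<in> H3 k" and "x \<noteq> 0"
  shows "\<exists>s\<in>SS k. \<exists>y\<in>H3 k. x = s + y"
proof -
  obtain n t where x: "x = n * aa k + t" and t: "level_mem k n t"
    using assms(1) by (rule H3E)
  consider "t = 0" | "0 < t" "t \<le> 3 * (n div 3)" | "3*k < t" "t < 3*k + 3 * ((n + 2) div 3)"
    using t unfolding level_mem_def by auto
  then show ?thesis
  proof cases
    case 1
    with assms(2) x have "1 \<le> n" by (cases n) simp_all
    then obtain m where m: "n = m + 1" by (metis le_add_diff_inverse2)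
    have "m * aa k + 0 \<in> H3 k" by (rule H3I[of k m 0]) (simp_all add: level_memI1)
    moreover have "x = aa k + (m * aa k + 0)" using x 1 m by simp
    ultimately show ?thesis unfolding SS_def by blast
  next
    case 2
    then show ?thesis using H3_split_first_run x by blast
  next
    case 3
    then show ?thesis using H3_split_second_run x by blast
  qed
qed

lemma gen_SS_eq_H3: "gen (SS k) = H3 k"
proof
  show "gen (SS k) \<subseteq> H3 k"
    by (rule gen_subset_closed) (auto intro: H3_add_generator H3I[of k 0 0] simp: level_mem_0)
  show "H3 k \<subseteq> gen (SS k)"
  proof (rule subset_gen_if_split)
    show "0 \<notin> SS k" by (simp add: SS_def aa_def bb_def cc_def)
  qed (rule H3_split_generator)
qed

lemma H3_threshold: "(3*k + 1) * aa k \<le> x \<Longrightarrow> x \<in> H3 k"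
proof -
  assume x: "(3*k + 1) * aa k \<le> x"
  have a: "0 < aa k" by (simp add: aa_def)
  have "3*k + 1 \<le> x div aa k"
    using div_le_mono[OF x, of "aa k"] a by simp
  then have "level_mem k (x div aa k) (x mod aa k)"
    using a by (intro level_mem_beyond) simp_all
  then show "x \<in> H3 k" by (rule H3I) simp
qed

lemma H3_level_canonical:
  assumes "n \<le> 3*k" and "t < aa k"
  shows "n * aa k + t \<in> H3 k \<longleftrightarrow> level_mem k n t"
proof
  assume "n * aa k + t \<in> H3 k"
  then obtain n' t' where eq: "n * aa k + t = n' * aa k + t'" and t': "level_mem k n' t'"
    by (rule H3E)
  show "level_mem k n t"
  proof (cases "t' < aa k")
    case True
    have "n = n' \<and> t = t'"
      using arg_cong[OF eq, of "\<lambda>x. x div aa k"] arg_cong[OF eq, of "\<lambda>x. x mod aa k"] assms(2) True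
      by simp
    then show ?thesis using t' by simp
  next
    case False
    then have "3*k + 1 \<le> n'" using level_mem_large t' by simp
    then have "(3*k + 1) * aa k \<le> n' * aa k + t'" using mult_le_mono1 trans_le_add1 by blast
    moreover have "n * aa k + t < (3*k + 1) * aa k"
    proof -
      have "n * aa k + t < (n + 1) * aa k" using assms(2) by simp
      also have "\<dots> \<le> (3*k + 1) * aa k" using assms(1) by (intro mult_le_mono1) simp
      finally show ?thesis .
    qed
    ultimately show ?thesis using eq by simp
  qed
qed (simp add: H3I)

lemma H3_below_twice_aa:
  assumes "x \<in> H3 k" and "x < 2 * aa k"
  shows "x = 0 \<or> x = aa k \<or> x = bb k \<or> x = cc k"
proof -
  obtain n t where x: "x = n * aa k + t" and t: "level_mem k n t"
    using assms(1) by (rule H3E)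
  have "n < 2"
  proof (rule ccontr)
    assume "\<not> n < 2"
    then have "2 * aa k \<le> n * aa k" using mult_le_mono1[of 2 n "aa k"] by simp
    then show False using assms(2) x by linarith
  qed
  then consider "n = 0" | "n = 1" by linarith
  then show ?thesis
  proof cases
    case 1
    then show ?thesis using x t level_mem_0 by simp
  next
    case 2
    then have "t = 0 \<or> t = 3*k + 1 \<or> t = 3*k + 2" using t level_mem_1_2 by blast
    then show ?thesis using x 2 generators_as_offsets[of k] by auto
  qed
qed

lemma infinite_H3: "infinite (H3 k)"
  unfolding infinite_nat_iff_unbounded_le
proof
  show "\<exists>n\<ge>m. n \<in> H3 k" for m
    by (rule exI[of _ "(3*k + 1) * aa k + m"]) (simp add: H3_threshold)
qed

lemma zero_in_H3: "0 \<in> H3 k"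
  using H3I[of k 0 0 0] by (simp add: level_mem_0)

lemma pieces_ordered_ABCD:
  assumes "1 \<le> i" and "i \<le> k"
  shows "set_less (Aik i k) (Bik i k) \<and> set_less (Bik i k) (Cik i k) \<and> set_less (Cik i k) (Dik i k)"
proof -
  define P where "P = 3*i*aa k"
  have "aa k = 6*k + 1" by (simp add: aa_def)
  then show ?thesis
    using assms unfolding pieces_as_intervals Bik_def Cik_def set_less_atLeastAtMost P_def[symmetric]
    by (intro conjI; linarith)
qed

lemma pieces_ordered_DEFGIJ:
  assumes "1 \<le> i" and "i < k"
  shows "set_less (Dik i k) (Eik i k) \<and> set_less (Eik i k) (Fik i k) \<and> set_less (Fik i k) (Gik i k) \<and>
    set_less (Gik i k) (Iik i k) \<and> set_less (Iik i k) (Jik i k) \<and> set_less (Jik i k) (Aik (i + 1) k)"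
proof -
  define P where "P = 3*i*aa k"
  have "3 * (i + 1) * aa k = P + 2 * aa k + aa k" unfolding P_def by (simp add: algebra_simps)
  moreover have "aa k = 6*k + 1" "bb k = 9*k + 2" "cc k = 9*k + 3" by (simp_all add: aa_def bb_def cc_def)
  ultimately show ?thesis
    using assms unfolding pieces_as_intervals Fik_def set_less_atLeastAtMost P_def[symmetric]
    by (intro conjI; linarith)
qed

section \<open>Residue weights\<close>

definition residue_weight :: "nat \<Rightarrow> int" where
  "residue_weight r = (if r = 0 then 1 else if r = 1 then 4 else -5)"

definition residue_potential :: "nat \<Rightarrow> int" where
  "residue_potential x = (if x mod 3 = 0 then 0 else if x mod 3 = 1 then 1 else 5)"

text \<open>The element 0 is not weighted, so the weight up to \<open>enumerate M n + 1\<close> involves exactly the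
  \<open>n\<close> elements \<open>enumerate M 1, \<dots>, enumerate M n\<close> when \<open>0 \<in> M\<close>.\<close>

definition weight_below :: "nat set \<Rightarrow> nat \<Rightarrow> int" where
  "weight_below M x = (\<Sum>h<x. if h \<in> M \<and> 0 < h then residue_weight (h mod 3) else 0)"

text \<open>The differences of two values of \<open>residue_potential\<close>.\<close>

definition balanced :: "int \<Rightarrow> bool" where
  "balanced d \<longleftrightarrow> d \<in> {-5, -4, -1, 0, 1, 4, 5}"

definition balanced_upto :: "nat set \<Rightarrow> nat \<Rightarrow> bool" where
  "balanced_upto M e \<longleftrightarrow> weight_below M e = 0 \<and> (\<forall>x\<le>e. balanced (weight_below M x))"

lemma residue_potential_Suc: "residue_potential (Suc x) = residue_potential x + residue_weight (x mod 3)"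
proof -
  have "Suc x mod 3 = (if x mod 3 = 2 then 0 else Suc (x mod 3))" by (simp add: mod_Suc)
  moreover have "x mod 3 = 0 \<or> x mod 3 = 1 \<or> x mod 3 = 2" by linarith
  ultimately show ?thesis unfolding residue_potential_def residue_weight_def by auto
qed

lemma residue_potential_cong: "x mod 3 = y mod 3 \<Longrightarrow> residue_potential x = residue_potential y"
  unfolding residue_potential_def by simp

lemma balanced_potential_diff: "balanced (residue_potential y - residue_potential z)"
  unfolding residue_potential_def balanced_def by auto

lemma weight_below_Suc:
  "weight_below M (Suc x) = weight_below M x + (if x \<in> M \<and> 0 < x then residue_weight (x mod 3) else 0)"
  unfolding weight_below_def by simp

lemma weight_below_run:
  assumes "p \<le> q" and "\<And>h. p \<le> h \<Longrightarrow> h < q \<Longrightarrow> h \<in> M \<and> 0 < h"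
  shows "weight_below M q = weight_below M p + residue_potential q - residue_potential p"
  using assms
proof (induction q rule: dec_induct)
  case (step q)
  then show ?case by (simp add: weight_below_Suc residue_potential_Suc)
qed simp

lemma weight_below_gap:
  assumes "p \<le> q" and "\<And>h. p \<le> h \<Longrightarrow> h < q \<Longrightarrow> h \<notin> M \<or> h = 0"
  shows "weight_below M q = weight_below M p"
  using assms
proof (induction q rule: dec_induct)
  case (step q)
  then show ?case by (auto simp: weight_below_Suc)
qed simp

lemma balanced_upto_0: "balanced_upto M 0"
  unfolding balanced_upto_def balanced_def weight_below_def by simp

lemma balanced_upto_gap:
  assumes "balanced_upto M p" and "p \<le> e" and "\<And>h. p \<le> h \<Longrightarrow> h < e \<Longrightarrow> h \<notin> M \<or> h = 0"
  shows "balanced_upto M e"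
proof -
  have flat: "weight_below M x = 0" if "p \<le> x" "x \<le> e" for x
    using that assms(1,3) weight_below_gap[of p x M] unfolding balanced_upto_def by auto
  have "balanced (weight_below M x)" if "x \<le> e" for x
  proof (cases "x \<le> p")
    case True
    then show ?thesis using assms(1) unfolding balanced_upto_def by blast
  next
    case False
    then show ?thesis using flat[of x] that by (simp add: balanced_def)
  qed
  then show ?thesis using flat[of e] assms(2) unfolding balanced_upto_def by simp
qed

lemma weight_below_run_then_gap:
  assumes "p \<le> r" and "r \<le> q"
    and run: "\<And>h. p \<le> h \<Longrightarrow> h < r \<Longrightarrow> h \<in> M \<and> 0 < h"
    and gap: "\<And>h. r \<le> h \<Longrightarrow> h < q \<Longrightarrow> h \<notin> M \<or> h = 0"
    and "p \<le> x" and "x \<le> q"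
  shows "weight_below M x = weight_below M p + residue_potential (min x r) - residue_potential p"
proof (cases "x \<le> r")
  case True
  then show ?thesis using weight_below_run[OF \<open>p \<le> x\<close>] run by simp
next
  case False
  then have "weight_below M x = weight_below M r" using gap \<open>x \<le> q\<close> by (intro weight_below_gap) auto
  then show ?thesis using weight_below_run[OF \<open>p \<le> r\<close>] run False by simp
qed

text \<open>The second run starts at the residue following the end of the first, so the gap between them
  leaves the potential unchanged.\<close>

lemma balanced_upto_two_runs:
  assumes bal: "balanced_upto M p" and "0 < p"
    and runs: "p + 3*u < q" "q + 3*v + 1 < e" "q mod 3 = Suc p mod 3"
    and mem: "\<And>h. p \<le> h \<Longrightarrow> h < e \<Longrightarrow> h \<in> M \<longleftrightarrow> h \<le> p + 3*u \<or> (q \<le> h \<and> h \<le> q + 3*v + 1)"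
  shows "balanced_upto M e"
proof -
  define r1 where "r1 = p + 3*u + 1"
  define r2 where "r2 = q + 3*v + 2"
  have W0: "weight_below M p = 0" using bal unfolding balanced_upto_def by simp
  have pot_r1: "residue_potential r1 = residue_potential q" and pot_r2: "residue_potential r2 = residue_potential p"
    unfolding r1_def r2_def using runs(3) by (auto intro!: residue_potential_cong) presburger+
  have "p \<le> r1" "r1 \<le> q" "q \<le> r2" "r2 \<le> e" using runs unfolding r1_def r2_def by simp_all
  have first: "weight_below M x = residue_potential (min x r1) - residue_potential p" if "p \<le> x" "x \<le> q" for x
    using weight_below_run_then_gap[OF \<open>p \<le> r1\<close> \<open>r1 \<le> q\<close> _ _ that] mem \<open>0 < p\<close> runs W0
    unfolding r1_def by auto
  have second: "weight_below M x = residue_potential (min x r2) - residue_potential p" if "q \<le> x" "x \<le> e" for x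
    using weight_below_run_then_gap[OF \<open>q \<le> r2\<close> \<open>r2 \<le> e\<close> _ _ that] mem \<open>0 < p\<close> runs
      first[of q] pot_r1 \<open>r1 \<le> q\<close> \<open>p \<le> r1\<close>
    unfolding r2_def by auto
  have "balanced (weight_below M x)" if "x \<le> e" for x
  proof -
    consider "x \<le> p" | "p \<le> x" "x \<le> q" | "q \<le> x" by linarith
    then show ?thesis
      by cases (use bal that first second balanced_potential_diff in \<open>auto simp: balanced_upto_def\<close>)
  qed
  moreover have "weight_below M e = 0" using second[of e] pot_r2 \<open>q \<le> r2\<close> \<open>r2 \<le> e\<close> by simp
  ultimately show ?thesis unfolding balanced_upto_def by blast
qed

lemma enumerate_Suc_le:
  assumes "infinite M" and "z \<in> M" and "enumerate M n < z"
  shows "enumerate M (Suc n) \<le> z"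
  using assms by (simp add: enumerate_Suc'' Least_le)

lemma enumerate_Suc_eqI:
  assumes "infinite M" and "enumerate M n = x" and "y \<in> M" and "x < y"
    and "\<And>z. z \<in> M \<Longrightarrow> x < z \<Longrightarrow> y \<le> z"
  shows "enumerate M (Suc n) = y"
proof (rule antisym)
  show "enumerate M (Suc n) \<le> y" using assms(2-4) by (intro enumerate_Suc_le[OF assms(1)]) simp_all
  show "y \<le> enumerate M (Suc n)"
    using assms(2,5) enumerate_step[OF assms(1), of n] enumerate_in_set[OF assms(1)] by simp
qed

lemma weight_below_enumerate_Suc:
  assumes "infinite M"
  shows "weight_below M (enumerate M (Suc n) + 1)
    = weight_below M (enumerate M n + 1) + residue_weight (enumerate M (Suc n) mod 3)"
proof -
  let ?g = "enumerate M"
  have lt: "?g n < ?g (Suc n)" by (rule enumerate_step[OF assms])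
  have "weight_below M (?g (Suc n)) = weight_below M (?g n + 1)"
  proof (rule weight_below_gap)
    show "h \<notin> M \<or> h = 0" if "?g n + 1 \<le> h" "h < ?g (Suc n)" for h
      using that enumerate_Suc_le[OF assms, of h n] by auto
  qed (use lt in simp)
  then show ?thesis using lt enumerate_in_set[OF assms] by (simp add: weight_below_Suc)
qed

lemma weight_below_enumerate_mod:
  assumes "infinite M" and "0 \<in> M"
  shows "weight_below M (enumerate M n + 1) mod 3 = int n mod 3"
proof (induction n)
  case 0
  have "enumerate M 0 = 0" using assms(2) by (simp add: enumerate_0)
  then show ?case by (simp add: weight_below_def)
next
  case (Suc n)
  have "residue_weight r mod 3 = 1" for r unfolding residue_weight_def by simp
  then have "weight_below M (enumerate M (Suc n) + 1) mod 3 = (int n mod 3 + 1) mod 3"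
    using Suc.IH unfolding weight_below_enumerate_Suc[OF assms(1)] by (metis mod_add_eq)
  then show ?case by presburger
qed

lemma balanced_mod_3: "balanced d \<Longrightarrow> d mod 3 = 0 \<Longrightarrow> d = 0"
  unfolding balanced_def by auto

lemma residue_weights_distinct:
  assumes "r1 < 3" "r2 < 3" "r3 < 3"
    and "balanced (residue_weight r1 + residue_weight r2)"
    and "residue_weight r1 + residue_weight r2 + residue_weight r3 = 0"
  shows "r1 \<noteq> r2 \<and> r1 \<noteq> r3 \<and> r2 \<noteq> r3"
proof -
  have "r1 = 0 \<or> r1 = 1 \<or> r1 = 2" "r2 = 0 \<or> r2 = 1 \<or> r2 = 2" "r3 = 0 \<or> r3 = 1 \<or> r3 = 2"
    using assms(1-3) by auto
  then show ?thesis using assms(4,5) unfolding residue_weight_def balanced_def by auto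
qed

lemma bij_betw_1_3:
  assumes "f 1 \<noteq> f 2" "f 1 \<noteq> f 3" "f 2 \<noteq> f 3" "f 1 < (3::nat)" "f 2 < 3" "f 3 < 3"
  shows "bij_betw f {1..3::nat} {..<3}"
proof -
  have e: "{1..3::nat} = {1, 2, 3}" by auto
  have inj: "inj_on f {1..3}" unfolding e using assms(1-3) by (auto simp: inj_on_def)
  moreover have "f ` {1..3} \<subseteq> {..<3}" unfolding e using assms(4-6) by auto
  moreover have "card (f ` {1..3}) = card {..<3::nat}" using card_image[OF inj] by simp
  ultimately show ?thesis unfolding bij_betw_def by (simp add: card_subset_eq)
qed

lemma enumerate_triples_residues:
  assumes "infinite M" and "0 \<in> M" and bal: "\<And>x. balanced (weight_below M x)"
  shows "bij_betw (\<lambda>j. enumerate M (m*3 + j) mod 3) {1..3} {..<3}"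
proof -
  define W where "W n = weight_below M (enumerate M n + 1)" for n
  define r where "r j = enumerate M (m*3 + j) mod 3" for j
  have step: "W (Suc n) = W n + residue_weight (enumerate M (Suc n) mod 3)" for n
    unfolding W_def by (rule weight_below_enumerate_Suc[OF assms(1)])
  have zero: "W n = 0" if "n mod 3 = 0" for n
  proof (rule balanced_mod_3)
    show "balanced (W n)" unfolding W_def by (rule bal)
    have "int n mod 3 = int (n mod 3)" by (simp add: zmod_int)
    then show "W n mod 3 = 0"
      using weight_below_enumerate_mod[OF assms(1,2), of n] that unfolding W_def by simp
  qed
  have r: "r 1 = enumerate M (Suc (m*3)) mod 3" "r 2 = enumerate M (Suc (Suc (m*3))) mod 3"
    "r 3 = enumerate M (Suc (Suc (Suc (m*3)))) mod 3"
  proof -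
    have "m*3 + 1 = Suc (m*3)" "m*3 + 2 = Suc (Suc (m*3))" "m*3 + 3 = Suc (Suc (Suc (m*3)))"
      by simp_all
    then show "r 1 = enumerate M (Suc (m*3)) mod 3" "r 2 = enumerate M (Suc (Suc (m*3))) mod 3"
      "r 3 = enumerate M (Suc (Suc (Suc (m*3)))) mod 3"
      unfolding r_def by metis+
  qed
  have W2: "W (Suc (Suc (m*3))) = residue_weight (r 1) + residue_weight (r 2)"
    using step[of "m*3"] step[of "Suc (m*3)"] zero[of "m*3"] unfolding r by simp
  have "W (Suc (Suc (Suc (m*3)))) = residue_weight (r 1) + residue_weight (r 2) + residue_weight (r 3)"
    using step[of "Suc (Suc (m*3))"] W2 unfolding r by simp
  moreover have "W (Suc (Suc (Suc (m*3)))) = 0" by (rule zero) simp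
  moreover have "balanced (W (Suc (Suc (m*3))))" unfolding W_def by (rule bal)
  ultimately have "r 1 \<noteq> r 2 \<and> r 1 \<noteq> r 3 \<and> r 2 \<noteq> r 3"
    using W2 by (intro residue_weights_distinct) (simp_all add: r_def)
  then show ?thesis unfolding r_def by (intro bij_betw_1_3) simp_all
qed

lemma balanced_upto_H3_levels:
  assumes "n \<le> 3*k"
  shows "balanced_upto (H3 k) ((n + 1) * aa k)"
  using assms
proof (induction n)
  case 0
  have "h = 0" if "h < aa k" "h \<in> H3 k" for h
    using H3_level_canonical[of 0 k h] that level_mem_0 by simp
  then show ?case by (intro balanced_upto_gap[OF balanced_upto_0]) auto
next
  case (Suc n)
  define p where "p = (n + 1) * aa k"
  define w where "w = (n + 3) div 3"
  have w: "1 \<le> w" "w \<le> k" "(Suc n + 2) div 3 = w" using Suc.prems unfolding w_def by simp_all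
  have a: "aa k = 6*k + 1" by (simp add: aa_def)
  have "3 * ((n + 1) div 3) \<le> 3*k" using Suc.prems by simp
  show ?case
  proof (rule balanced_upto_two_runs[where u = "(n + 1) div 3" and q = "p + 3*k + 1" and v = "w - 1"])
    show "balanced_upto (H3 k) p" using Suc unfolding p_def by simp
    show "0 < p" unfolding p_def by (simp add: aa_def)
    show "p + 3 * ((n + 1) div 3) < p + 3*k + 1" using \<open>3 * ((n + 1) div 3) \<le> 3*k\<close> by simp
    show "p + 3*k + 1 + 3 * (w - 1) + 1 < (Suc n + 1) * aa k" using w a unfolding p_def by simp
    show "(p + 3*k + 1) mod 3 = Suc p mod 3" by presburger
  next
    fix h assume h: "p \<le> h" "h < (Suc n + 1) * aa k"
    define t where "t = h - Suc n * aa k"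
    have t: "h = Suc n * aa k + t" "t < aa k" using h unfolding t_def p_def by simp_all
    have "h \<in> H3 k \<longleftrightarrow> level_mem k (Suc n) t" using H3_level_canonical[OF Suc.prems t(2)] t(1) by simp
    also have "\<dots> \<longleftrightarrow> h \<le> p + 3 * ((n + 1) div 3) \<or> (p + 3*k + 1 \<le> h \<and> h \<le> p + 3*k + 1 + 3 * (w - 1) + 1)"
      unfolding level_mem_def using w t(1) unfolding p_def by auto
    finally show "h \<in> H3 k \<longleftrightarrow> h \<le> p + 3 * ((n + 1) div 3) \<or> (p + 3*k + 1 \<le> h \<and> h \<le> p + 3*k + 1 + 3 * (w - 1) + 1)" .
  qed
qed

lemma balanced_upto_H3_tail: "balanced_upto (H3 k) ((3*k + 1) * aa k + 3*j)"
proof (induction j)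
  case 0
  then show ?case using balanced_upto_H3_levels[of "3*k" k] by simp
next
  case (Suc j)
  define p where "p = (3*k + 1) * aa k + 3*j"
  show ?case
  proof (rule balanced_upto_two_runs[where p = p and u = 0 and q = "p + 1" and v = 0])
    show "balanced_upto (H3 k) p" using Suc unfolding p_def .
    show "0 < p" unfolding p_def by (simp add: aa_def)
  next
    fix h assume "p \<le> h" "h < (3*k + 1) * aa k + 3 * Suc j"
    moreover from this have "h \<in> H3 k" unfolding p_def by (intro H3_threshold) simp
    ultimately show "h \<in> H3 k \<longleftrightarrow> h \<le> p + 3*0 \<or> (p + 1 \<le> h \<and> h \<le> p + 1 + 3*0 + 1)"
      unfolding p_def by auto
  qed (simp_all add: p_def)
qed

lemma balanced_weight_below_H3: "balanced (weight_below (H3 k) x)"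
proof -
  have "x \<le> (3*k + 1) * aa k + 3*x" by simp
  then show ?thesis using balanced_upto_H3_tail[of k x] unfolding balanced_upto_def by blast
qed

lemma enumerate_H3_generators:
  "enumerate (H3 k) 1 = aa k \<and> enumerate (H3 k) 2 = bb k \<and> enumerate (H3 k) 3 = cc k"
proof -
  note inf = infinite_H3[of k]
  note abc = generators_as_offsets[of k]
  have gens: "aa k \<in> H3 k" "bb k \<in> H3 k" "cc k \<in> H3 k"
    using gen_SS_eq_H3[of k] subset_gen[of "SS k"] unfolding SS_def by auto
  have small: "z = 0 \<or> z = aa k \<or> z = bb k \<or> z = cc k \<or> 2 * aa k \<le> z" if "z \<in> H3 k" for z
    using H3_below_twice_aa[OF that] not_less by blast
  have e0: "enumerate (H3 k) 0 = 0" using zero_in_H3 by (simp add: enumerate_0)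
  have e1: "enumerate (H3 k) (Suc 0) = aa k"
  proof (rule enumerate_Suc_eqI[OF inf e0 gens(1)])
    show "0 < aa k" using abc by simp
    show "aa k \<le> z" if "z \<in> H3 k" "0 < z" for z
      using small[OF that(1)] that(2) abc by auto
  qed
  have e2: "enumerate (H3 k) (Suc (Suc 0)) = bb k"
  proof (rule enumerate_Suc_eqI[OF inf e1 gens(2)])
    show "aa k < bb k" using abc by simp
    show "bb k \<le> z" if "z \<in> H3 k" "aa k < z" for z
      using small[OF that(1)] that(2) abc by auto
  qed
  have e3: "enumerate (H3 k) (Suc (Suc (Suc 0))) = cc k"
  proof (rule enumerate_Suc_eqI[OF inf e2 gens(3)])
    show "bb k < cc k" using abc by simp
    show "cc k \<le> z" if "z \<in> H3 k" "bb k < z" for z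
      using that(2) abc by simp
  qed
  show ?thesis using e1 e2 e3 by (simp add: numeral_2_eq_2 numeral_3_eq_3)
qed

lemma perm_numerical_semigroup_H3: "perm_numerical_semigroup 3 (H3 k)"
  unfolding perm_numerical_semigroup_def
proof (intro conjI allI)
  have "UNIV - H3 k \<subseteq> {..< (3*k + 1) * aa k}"
  proof
    show "x \<in> {..< (3*k + 1) * aa k}" if "x \<in> UNIV - H3 k" for x
      using that H3_threshold[of k x] by (auto simp: not_le[symmetric])
  qed
  then have "finite (UNIV - H3 k)" by (rule finite_subset) simp
  then show "numerical_semigroup (H3 k)"
    unfolding numerical_semigroup_def using submonoid_gen[of "SS k"] gen_SS_eq_H3[of k] by simp
  have "{1..3::nat} = {1, 2, 3}" by auto
  then have "enumerate (H3 k) ` {1..3} = SS k"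
    using enumerate_H3_generators[of k] unfolding SS_def by simp
  then show "H3 k = gen (enumerate (H3 k) ` {1..3})" using gen_SS_eq_H3 by simp
  show "bij_betw (\<lambda>j. enumerate (H3 k) (m * 3 + j) mod 3) {1..3} {..<3}" for m
    using infinite_H3 zero_in_H3 balanced_weight_below_H3 by (rule enumerate_triples_residues)
qed

theorem lemma4p3:
  fixes k :: nat
  assumes "k \<ge> 1"
  shows "(submonoid (H3 k) \<and> SS k \<subseteq> H3 k)
    \<and> (\<forall>i\<in>{1..k-1}.
          set_less (Aik i k) (Bik i k) \<and> set_less (Bik i k) (Cik i k) \<and>
          set_less (Cik i k) (Dik i k) \<and> set_less (Dik i k) (Eik i k) \<and>
          set_less (Eik i k) (Fik i k) \<and> set_less (Fik i k) (Gik i k) \<and>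
          set_less (Gik i k) (Iik i k) \<and> set_less (Iik i k) (Jik i k) \<and>
          set_less (Jik i k) (Aik (i+1) k))
    \<and> (set_less (Aik k k) (Bik k k) \<and> set_less (Bik k k) (Cik k k) \<and>
       set_less (Cik k k) (Dik k k))
    \<and> {(3*k+1) * aa k ..} \<subseteq> H3 k
    \<and> gen (SS k) = H3 k
    \<and> perm_numerical_semigroup 3 (H3 k)"
proof (intro conjI ballI)
  show "submonoid (H3 k)" "SS k \<subseteq> H3 k"
    using submonoid_gen[of "SS k"] subset_gen[of "SS k"] gen_SS_eq_H3[of k] by simp_all
  show "{(3*k+1) * aa k ..} \<subseteq> H3 k" using H3_threshold by blast
  show "gen (SS k) = H3 k" by (rule gen_SS_eq_H3)
  show "perm_numerical_semigroup 3 (H3 k)" by (rule perm_numerical_semigroup_H3)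
  show "set_less (Aik k k) (Bik k k)" "set_less (Bik k k) (Cik k k)" "set_less (Cik k k) (Dik k k)"
    using pieces_ordered_ABCD[OF assms order_refl] by simp_all
  fix i assume "i \<in> {1..k-1}"
  then have i: "1 \<le> i" "i < k" using assms by auto
  show "set_less (Aik i k) (Bik i k)" "set_less (Bik i k) (Cik i k)" "set_less (Cik i k) (Dik i k)"
    using pieces_ordered_ABCD[OF i(1) less_imp_le[OF i(2)]] by simp_all
  show "set_less (Dik i k) (Eik i k)" "set_less (Eik i k) (Fik i k)" "set_less (Fik i k) (Gik i k)"
    "set_less (Gik i k) (Iik i k)" "set_less (Iik i k) (Jik i k)" "set_less (Jik i k) (Aik (i + 1) k)"
    using pieces_ordered_DEFGIJ[OF i] by simp_all
qed

end
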